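(* In the planted $k$-factor model, for every $\ell\in\{0,1,\dots,kn/2\}$ let $Z_\ell(H^*,G)$ be the number of $H\in\mathcal H$ with $|H\cap H^*|=\ell$ and $H\subseteq E(G)$. Then $$\mathbb E[Z_\ell(H^*,G)]\le (nkp)^{kn/2-\ell}.$$
   Context: Planted $k$-factor model: fix an integer $k\ge1$ and $n$ with $kn$ even. A $k$-factor on $[n]$ is a $k$-regular simple graph with vertex set $[n]$, identified with its edge set; $\mathcal H$ is the set of all $k$-factors on $[n]$. Let $p\in[0,1]$. Draw $H^*$ uniformly at random from $\mathcal H$ and, independently, $G_0\sim\mathcal G(n,p)$ (each of the $\binom n2$ vertex pairs is an edge independently with probability $p$). The observed graph is $G=G_0\cup H^*$. *)

theory Defs
  imports "HOL-Probability.Probability"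
begin

text \<open>Vertex set [n] is rendered as {0..<n}; an edge is a 2-element subset of it.\<close>

definition all_pairs :: "nat \<Rightarrow> nat set set" where
  "all_pairs n = {e. e \<subseteq> {0..<n} \<and> card e = 2}"

definition is_k_factor :: "nat \<Rightarrow> nat \<Rightarrow> nat set set \<Rightarrow> bool" where
  "is_k_factor n k H \<longleftrightarrow> H \<subseteq> all_pairs n \<and> (\<forall>v\<in>{0..<n}. card {e\<in>H. v \<in> e} = k)"

definition k_factors :: "nat \<Rightarrow> nat \<Rightarrow> nat set set set" where
  "k_factors n k = {H. is_k_factor n k H}"

definition gnp :: "nat \<Rightarrow> real \<Rightarrow> nat set set pmf" where
  "gnp n p = map_pmf (\<lambda>X. {e \<in> all_pairs n. X e})
              (Pi_pmf (all_pairs n) False (\<lambda>_. bernoulli_pmf p))"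

definition planted_pmf :: "nat \<Rightarrow> nat \<Rightarrow> real \<Rightarrow> (nat set set \<times> nat set set) pmf" where
  "planted_pmf n k p = pair_pmf (pmf_of_set (k_factors n k)) (gnp n p)"

definition Z_count :: "nat \<Rightarrow> nat \<Rightarrow> nat \<Rightarrow> nat set set \<Rightarrow> nat set set \<Rightarrow> nat" where
  "Z_count n k l Hs G = card {H \<in> k_factors n k. card (H \<inter> Hs) = l \<and> H \<subseteq> G}"

end

theory Submission
  imports Defs
begin

text \<open>Given the planted factor \<open>H*\<close>, a factor \<open>H\<close> with \<open>|H \<inter> H*| = l\<close> lies in \<open>G0 \<union> H*\<close> exactly
  when the \<open>e = kn/2 - l\<close> edges of \<open>H - H*\<close> lie in \<open>G0\<close>, which has probability \<open>p^e\<close>. Such an \<open>H\<close> is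
  determined by the pair \<open>(H* - H, H - H*)\<close>: the first component is one of \<open>(kn/2 choose e)\<close>
  subsets of \<open>H*\<close>, the second an \<open>e\<close>-edge graph with the same degree sequence as the first.
  Removing the edges at a vertex one by one shows that a degree sequence with \<open>e\<close> edges is
  realised by at most \<open>2^e e!\<close> graphs, so there are at most \<open>(kn/2)^e 2^e = (nk)^e\<close> such \<open>H\<close>.\<close>

definition edge_degree :: "nat set set \<Rightarrow> nat \<Rightarrow> nat" where
  "edge_degree F v = card {x\<in>F. v \<in> x}"

definition graphs_with_degrees :: "nat \<Rightarrow> nat \<Rightarrow> (nat \<Rightarrow> nat) \<Rightarrow> nat set set set" where
  "graphs_with_degrees n e d =
     {F. F \<subseteq> all_pairs n \<and> card F = e \<and> (\<forall>v<n. edge_degree F v = d v)}"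

lemma finite_all_pairs [simp]: "finite (all_pairs n)"
  unfolding all_pairs_def by (rule finite_subset[of _ "Pow {0..<n}"]) auto

lemma finite_graphs_with_degrees [simp]: "finite (graphs_with_degrees n e d)"
  unfolding graphs_with_degrees_def by (rule finite_subset[of _ "Pow (all_pairs n)"]) auto

lemma edge_degree_pos_iff: "finite F \<Longrightarrow> 0 < edge_degree F v \<longleftrightarrow> v \<in> \<Union>F"
  unfolding edge_degree_def by (auto simp: card_gt_0_iff)

lemma card_Union_le_double_card:
  assumes "F \<subseteq> all_pairs n"
  shows "card (\<Union>F) \<le> 2 * card F"
proof -
  have "card (\<Union>F) \<le> sum card F" by (rule card_Union_le_sum_card)
  also have "\<dots> = 2 * card F"
    using assms by (simp add: all_pairs_def subset_iff)
  finally show ?thesis .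
qed

lemma Union_graphs_with_degrees:
  assumes "F \<in> graphs_with_degrees n e d"
  shows "\<Union>F = {v. v < n \<and> 0 < d v}"
proof -
  have F: "F \<subseteq> all_pairs n" "\<And>v. v < n \<Longrightarrow> edge_degree F v = d v"
    using assms by (auto simp: graphs_with_degrees_def)
  then have "finite F" "\<Union>F \<subseteq> {0..<n}"
    by (auto intro: finite_subset simp: all_pairs_def)
  have "v \<in> \<Union>F \<longleftrightarrow> v < n \<and> 0 < d v" for v
    using F \<open>finite F\<close> \<open>\<Union>F \<subseteq> {0..<n}\<close> edge_degree_pos_iff[of F v] by auto
  then show ?thesis by blast
qed

lemma remove_edge_graphs_with_degrees:
  assumes F: "F \<in> graphs_with_degrees n (Suc e) d" and x: "x \<in> F"
  shows "F - {x} \<in> graphs_with_degrees n e (\<lambda>u. d u - (if u \<in> x then 1 else 0))"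
proof -
  have sub: "F \<subseteq> all_pairs n" and card: "card F = Suc e"
    and deg: "\<And>v. v < n \<Longrightarrow> edge_degree F v = d v"
    using F by (auto simp: graphs_with_degrees_def)
  have "finite F" using sub by (rule finite_subset) simp
  have "edge_degree (F - {x}) u = edge_degree F u - (if u \<in> x then 1 else 0)" for u
  proof -
    have "{y\<in>F - {x}. u \<in> y} = {y\<in>F. u \<in> y} - (if u \<in> x then {x} else {})"
      by auto
    then show ?thesis
      unfolding edge_degree_def using \<open>finite F\<close> x by (simp add: card_Diff_singleton)
  qed
  with sub card deg x \<open>finite F\<close> show ?thesis
    by (auto simp: graphs_with_degrees_def)
qed

lemma graphs_with_degrees_Suc_subset:
  assumes F0: "F0 \<in> graphs_with_degrees n (Suc e) d" and v: "v \<in> \<Union>F0"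
  shows "graphs_with_degrees n (Suc e) d \<subseteq>
    (\<Union>w\<in>\<Union>F0 - {v}. insert {v, w} `
       graphs_with_degrees n e (\<lambda>u. d u - (if u \<in> {v, w} then 1 else 0)))"
proof
  fix F assume F: "F \<in> graphs_with_degrees n (Suc e) d"
  have "\<Union>F = \<Union>F0"
    using Union_graphs_with_degrees[OF F] Union_graphs_with_degrees[OF F0] by simp
  with v obtain x where x: "x \<in> F" "v \<in> x" by auto
  moreover have "x \<in> all_pairs n" using F x by (auto simp: graphs_with_degrees_def)
  ultimately obtain w where w: "x = {v, w}" "w \<noteq> v"
    by (auto simp: all_pairs_def card_2_iff doubleton_eq_iff)
  have "w \<in> \<Union>F0 - {v}" using \<open>\<Union>F = \<Union>F0\<close> x w by auto
  moreover have "F = insert {v, w} (F - {{v, w}})" using x w by auto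
  moreover note remove_edge_graphs_with_degrees[OF F x(1)]
  ultimately show "F \<in> (\<Union>w\<in>\<Union>F0 - {v}. insert {v, w} `
       graphs_with_degrees n e (\<lambda>u. d u - (if u \<in> {v, w} then 1 else 0)))"
    using w by blast
qed

lemma card_graphs_with_degrees_le: "card (graphs_with_degrees n e d) \<le> 2 ^ e * fact e"
proof (induction e arbitrary: d)
  case 0
  have "graphs_with_degrees n 0 d \<subseteq> {{}}"
    by (auto simp: graphs_with_degrees_def dest: finite_subset[OF _ finite_all_pairs])
  then have "card (graphs_with_degrees n 0 d) \<le> card {{}::nat set set}"
    by (intro card_mono) auto
  then show ?case by simp
next
  case (Suc e)
  show ?case
  proof (cases "graphs_with_degrees n (Suc e) d = {}")
    case False
    then obtain F0 where F0: "F0 \<in> graphs_with_degrees n (Suc e) d" by blast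
    then have F0_sub: "F0 \<subseteq> all_pairs n" and card_F0: "card F0 = Suc e"
      by (auto simp: graphs_with_degrees_def)
    then obtain x where "x \<in> F0"
      by (metis card.empty ex_in_conv nat.distinct(1))
    with F0_sub obtain v where v: "v \<in> \<Union>F0"
      by (force simp: all_pairs_def card_2_iff)
    define W where "W = \<Union>F0 - {v}"
    have "finite W"
      using F0_sub by (auto simp: W_def all_pairs_def intro: finite_subset)
    have card_W: "card W \<le> 2 * Suc e"
      using card_Union_le_double_card[OF F0_sub] card_F0 card_Diff1_le[of "\<Union>F0" v]
      by (simp add: W_def)
    have "card (graphs_with_degrees n (Suc e) d)
        \<le> card (\<Union>w\<in>W. insert {v, w} `
             graphs_with_degrees n e (\<lambda>u. d u - (if u \<in> {v, w} then 1 else 0)))"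
      using graphs_with_degrees_Suc_subset[OF F0 v] \<open>finite W\<close>
      by (intro card_mono) (auto simp: W_def)
    also have "\<dots> \<le> (\<Sum>w\<in>W. card (graphs_with_degrees n e
                       (\<lambda>u. d u - (if u \<in> {v, w} then 1 else 0))))"
      by (rule order_trans[OF card_UN_le[OF \<open>finite W\<close>]]) (intro sum_mono card_image_le; simp)
    also have "\<dots> \<le> (\<Sum>w\<in>W. 2 ^ e * fact e)"
      by (intro sum_mono Suc.IH)
    also have "\<dots> = card W * (2 ^ e * fact e)"
      by simp
    also have "\<dots> \<le> 2 * Suc e * (2 ^ e * fact e)"
      using card_W by (rule mult_right_mono) simp
    also have "\<dots> = 2 ^ Suc e * fact (Suc e)"
      by (simp add: fact_Suc algebra_simps)
    finally show ?thesis .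
  qed simp
qed

lemma k_factors_subset_all_pairs: "H \<in> k_factors n k \<Longrightarrow> H \<subseteq> all_pairs n"
  by (simp add: k_factors_def is_k_factor_def)

lemma finite_k_factor: "H \<in> k_factors n k \<Longrightarrow> finite H"
  using finite_subset[OF k_factors_subset_all_pairs finite_all_pairs] .

lemma finite_k_factors [simp]: "finite (k_factors n k)"
  unfolding k_factors_def is_k_factor_def
  by (rule finite_subset[of _ "Pow (all_pairs n)"]) auto

lemma edge_degree_k_factor: "H \<in> k_factors n k \<Longrightarrow> v < n \<Longrightarrow> edge_degree H v = k"
  by (simp add: k_factors_def is_k_factor_def edge_degree_def)

lemma k_factor_handshake:
  assumes H: "H \<in> k_factors n k"
  shows "2 * card H = k * n"
proof -
  have "k * n = (\<Sum>v<n. edge_degree H v)"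
    using edge_degree_k_factor[OF H] by simp
  also have "\<dots> = (\<Sum>v<n. \<Sum>x\<in>H. if v \<in> x then 1 else 0)"
    unfolding edge_degree_def using finite_k_factor[OF H]
    by (simp add: sum.inter_filter[symmetric])
  also have "\<dots> = (\<Sum>x\<in>H. card {v\<in>{..<n}. v \<in> x})"
    by (subst sum.swap) (simp add: sum.inter_filter[symmetric])
  also have "\<dots> = (\<Sum>x\<in>H. 2)"
  proof (rule sum.cong)
    fix x assume "x \<in> H"
    then have "x \<subseteq> {..<n}" "card x = 2"
      using k_factors_subset_all_pairs[OF H] by (auto simp: all_pairs_def lessThan_atLeast0)
    then have "{v\<in>{..<n}. v \<in> x} = x" by auto
    with \<open>card x = 2\<close> show "card {v\<in>{..<n}. v \<in> x} = 2" by simp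
  qed simp
  finally show ?thesis by simp
qed

lemma card_k_factor: "H \<in> k_factors n k \<Longrightarrow> card H = k * n div 2"
  unfolding k_factor_handshake[symmetric] by simp

lemma edge_degree_Diff_plus_Int:
  "finite H \<Longrightarrow> edge_degree (H - B) v + edge_degree (H \<inter> B) v = edge_degree H v"
  unfolding edge_degree_def
  by (subst card_Un_disjoint[symmetric]) (auto intro: arg_cong[where f = card])

lemma edge_degree_Diff_k_factors:
  assumes "H \<in> k_factors n k" "H' \<in> k_factors n k" "v < n"
  shows "edge_degree (H - H') v = edge_degree (H' - H) v"
  using edge_degree_Diff_plus_Int[of H H' v] edge_degree_Diff_plus_Int[of H' H v]
    edge_degree_k_factor[OF assms(1,3)] edge_degree_k_factor[OF assms(2,3)]
    finite_k_factor[OF assms(1)] finite_k_factor[OF assms(2)]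
  by (simp add: Int_commute)

lemma card_Diff_k_factors:
  assumes "H \<in> k_factors n k" "Hs \<in> k_factors n k"
  shows "card (H - Hs) = k * n div 2 - card (H \<inter> Hs)"
  using card_Diff_subset_Int[of H Hs] card_k_factor[OF assms(1)] finite_k_factor[OF assms(1)]
  by simp

lemma k_factor_Diff_in_graphs_with_degrees:
  assumes H: "H \<in> k_factors n k" and Hs: "Hs \<in> k_factors n k"
  shows "H - Hs \<in> graphs_with_degrees n (card (H - Hs)) (edge_degree (Hs - H))"
  using k_factors_subset_all_pairs[OF H] edge_degree_Diff_k_factors[OF H Hs]
  by (auto simp: graphs_with_degrees_def)

lemma card_k_factors_with_overlap_le:
  assumes Hs: "Hs \<in> k_factors n k"
  shows "card {H\<in>k_factors n k. card (H \<inter> Hs) = l} \<le> (n * k) ^ (k * n div 2 - l)"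
proof -
  define m where "m = k * n div 2"
  define e where "e = m - l"
  define A where "A = {H\<in>k_factors n k. card (H \<inter> Hs) = l}"
  define Ds where "Ds = {D. D \<subseteq> Hs \<and> card D = e}"
  have card_Diff: "card (H - Hs) = e" "card (Hs - H) = e" if "H \<in> A" for H
    using that card_Diff_k_factors[OF _ Hs, of H] card_Diff_k_factors[OF Hs, of H]
    by (auto simp: A_def e_def m_def Int_commute)
  have "inj_on (\<lambda>H. (Hs - H, H - Hs)) A"
    by (rule inj_onI) (metis Diff_Diff_Int Int_commute Un_Diff_Int prod.inject)
  moreover have "(\<lambda>H. (Hs - H, H - Hs)) ` A
      \<subseteq> Sigma Ds (\<lambda>D. graphs_with_degrees n e (edge_degree D))"
    using k_factor_Diff_in_graphs_with_degrees[OF _ Hs] card_Diff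
    by (fastforce simp: A_def Ds_def)
  moreover have "finite Ds"
    using finite_k_factor[OF Hs] by (simp add: Ds_def)
  ultimately have "card A \<le> card (Sigma Ds (\<lambda>D. graphs_with_degrees n e (edge_degree D)))"
    by (intro card_inj_on_le) auto
  also have "\<dots> = (\<Sum>D\<in>Ds. card (graphs_with_degrees n e (edge_degree D)))"
    using \<open>finite Ds\<close> by (simp add: card_SigmaI)
  also have "\<dots> \<le> (\<Sum>D\<in>Ds. 2 ^ e * fact e)"
    by (intro sum_mono card_graphs_with_degrees_le)
  also have "\<dots> = card Ds * (2 ^ e * fact e)"
    by simp
  also have "card Ds = m choose e"
    using n_subsets[OF finite_k_factor[OF Hs]] card_k_factor[OF Hs] by (simp add: Ds_def m_def)
  also have "(m choose e) * (2 ^ e * fact e) \<le> m ^ e * 2 ^ e"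
    using binomial_fact_pow[of m e] by (simp add: mult.assoc mult.left_commute[of "2 ^ e"])
  also have "\<dots> = (2 * m) ^ e"
    by (simp add: power_mult_distrib)
  also have "2 * m = n * k"
    using k_factor_handshake[OF Hs] card_k_factor[OF Hs] by (simp add: m_def)
  finally show ?thesis by (simp add: A_def e_def m_def)
qed

lemma set_pmf_gnp: "set_pmf (gnp n p) \<subseteq> Pow (all_pairs n)"
  unfolding gnp_def by auto

lemma finite_set_pmf_gnp: "finite (set_pmf (gnp n p))"
  using set_pmf_gnp by (rule finite_subset) simp

lemma prob_gnp_superset:
  assumes B: "B \<subseteq> all_pairs n" and p: "0 \<le> p" "p \<le> 1"
  shows "measure_pmf.prob (gnp n p) {G. B \<subseteq> G} = p ^ card B"
proof -
  have "(\<lambda>X. {e \<in> all_pairs n. X e}) -` {G. B \<subseteq> G} =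
        Pi (all_pairs n) (\<lambda>a. if a \<in> B then {True} else UNIV)"
    using B by (auto simp: Pi_def)
  then have "measure_pmf.prob (gnp n p) {G. B \<subseteq> G} =
    measure_pmf.prob (Pi_pmf (all_pairs n) False (\<lambda>_. bernoulli_pmf p))
       (Pi (all_pairs n) (\<lambda>a. if a \<in> B then {True} else UNIV))"
    unfolding gnp_def by simp
  also have "\<dots> = (\<Prod>a\<in>all_pairs n. measure_pmf.prob (bernoulli_pmf p)
                                       (if a \<in> B then {True} else UNIV))"
    by (rule measure_Pi_pmf_Pi) simp
  also have "\<dots> = (\<Prod>a\<in>all_pairs n. if a \<in> B then p else 1)"
    using p by (intro prod.cong) (auto simp: measure_pmf_single)
  also have "\<dots> = p ^ card B"
    using B by (simp add: prod.If_cases Int_absorb1)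
  finally show ?thesis .
qed

lemma expectation_gnp_Z_count_le:
  assumes Hs: "Hs \<in> k_factors n k" and p: "0 \<le> p" "p \<le> 1"
  shows "measure_pmf.expectation (gnp n p) (\<lambda>G0. real (Z_count n k l Hs (G0 \<union> Hs)))
         \<le> (real n * real k * p) ^ (k * n div 2 - l)"
proof -
  define e where "e = k * n div 2 - l"
  define A where "A = {H\<in>k_factors n k. card (H \<inter> Hs) = l}"
  have "finite A" by (simp add: A_def)
  have Z: "real (Z_count n k l Hs (G0 \<union> Hs)) = (\<Sum>H\<in>A. indicator {G. H - Hs \<subseteq> G} G0)" for G0
  proof -
    have "{H\<in>k_factors n k. card (H \<inter> Hs) = l \<and> H \<subseteq> G0 \<union> Hs}
        = {H\<in>A. G0 \<in> {G. H - Hs \<subseteq> G}}"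
      by (auto simp: A_def)
    then show ?thesis
      using \<open>finite A\<close> by (simp add: Z_count_def indicator_def sum.If_cases Int_def)
  qed
  have prob: "measure_pmf.prob (gnp n p) {G. H - Hs \<subseteq> G} = p ^ e" if "H \<in> A" for H
    using that p prob_gnp_superset[of "H - Hs" n p] card_Diff_k_factors[OF _ Hs, of H]
      k_factors_subset_all_pairs[of H n k]
    by (auto simp: A_def e_def)
  have "measure_pmf.expectation (gnp n p) (\<lambda>G0. real (Z_count n k l Hs (G0 \<union> Hs)))
      = (\<Sum>H\<in>A. measure_pmf.prob (gnp n p) {G. H - Hs \<subseteq> G})"
    unfolding Z by (subst Bochner_Integration.integral_sum)
                   (simp_all add: measure_pmf.integrable_const_bound[where B = 1])
  also have "\<dots> = real (card A) * p ^ e"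
    using prob by simp
  also have "\<dots> \<le> (real n * real k) ^ e * p ^ e"
  proof (rule mult_right_mono)
    have "real (card A) \<le> real ((n * k) ^ e)"
      using card_k_factors_with_overlap_le[OF Hs, of l] unfolding A_def e_def of_nat_le_iff .
    then show "real (card A) \<le> (real n * real k) ^ e"
      by simp
  qed (use p in simp)
  finally show ?thesis
    by (simp add: e_def power_mult_distrib)
qed

lemma expectation_pair_pmf_of_set_le:
  fixes f :: "'a \<times> 'b \<Rightarrow> real"
  assumes "A \<noteq> {}" "finite A" "finite (set_pmf N)"
    and "\<And>x. x \<in> A \<Longrightarrow> measure_pmf.expectation N (\<lambda>y. f (x, y)) \<le> c"
  shows "measure_pmf.expectation (pair_pmf (pmf_of_set A) N) f \<le> c"
proof -
  have "pair_pmf (pmf_of_set A) N = pmf_of_set A \<bind> (\<lambda>x. map_pmf (Pair x) N)"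
    by (simp add: pair_pmf_def map_pmf_def)
  then have "measure_pmf.expectation (pair_pmf (pmf_of_set A) N) f
      = (\<Sum>x\<in>A. measure_pmf.expectation N (\<lambda>y. f (x, y))) / real (card A)"
    using assms(1-3)
    by (simp add: pmf_expectation_bind_pmf_of_set sum_divide_distrib divide_inverse_commute
                  sum_distrib_left)
  also have "\<dots> \<le> (\<Sum>x\<in>A. c) / real (card A)"
    by (intro divide_right_mono sum_mono assms(4)) simp_all
  also have "\<dots> = c"
    using assms(1,2) by simp
  finally show ?thesis .
qed

theorem mainTheorem12:
  fixes n k l :: nat and p :: real
  assumes "k \<ge> 1" and "even (k * n)"
    and "k_factors n k \<noteq> {}"
    and "0 \<le> p" and "p \<le> 1"
    and "l \<le> k * n div 2"
  shows "measure_pmf.expectation (planted_pmf n k p)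
           (\<lambda>(Hs, G0). real (Z_count n k l Hs (G0 \<union> Hs)))
         \<le> (real n * real k * p) ^ (k * n div 2 - l)"
  unfolding planted_pmf_def
proof (rule expectation_pair_pmf_of_set_le)
  fix Hs assume "Hs \<in> k_factors n k"
  then show "measure_pmf.expectation (gnp n p)
      (\<lambda>G0. (\<lambda>(Hs, G0). real (Z_count n k l Hs (G0 \<union> Hs))) (Hs, G0))
      \<le> (real n * real k * p) ^ (k * n div 2 - l)"
    using expectation_gnp_Z_count_le assms(4,5) by simp
qed (simp_all add: assms(3) finite_set_pmf_gnp)

end
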